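(* For every finite graph $G$ on $n \ge 1$ vertices, we have \[f(G) \ge \frac{1}{250}\left(\frac{n}{\hom(G)}\right)^{1/2}.\]
   Context: All graphs are finite and simple. A subset of the vertices of a graph is homogeneous if it induces either a clique or an independent set; $\hom(G)$ denotes the size of the largest homogeneous set of $G$. For a graph $G$, $f(G)$ denotes the largest integer $k$ for which $G$ contains an induced subgraph in which exactly $k$ distinct values occur among the vertex degrees (i.e., an induced subgraph with $k$ distinct degrees). *)

theory Defs
  imports Complex_Main
begin

text \<open>A finite simple graph is given by a finite vertex set V and a symmetric,
irreflexive edge relation E (only its restriction to V matters).\<close>

definition simple_graph :: "'a set \<Rightarrow> ('a \<Rightarrow> 'a \<Rightarrow> bool) \<Rightarrow> bool" where
  "simple_graph V E \<longleftrightarrow> finite V \<and> (\<forall>u\<in>V. \<forall>v\<in>V. E u v \<longleftrightarrow> E v u) \<and> (\<forall>v\<in>V. \<not> E v v)"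

definition homogeneous :: "('a \<Rightarrow> 'a \<Rightarrow> bool) \<Rightarrow> 'a set \<Rightarrow> bool" where
  "homogeneous E S \<longleftrightarrow>
     (\<forall>u\<in>S. \<forall>v\<in>S. u \<noteq> v \<longrightarrow> E u v) \<or> (\<forall>u\<in>S. \<forall>v\<in>S. u \<noteq> v \<longrightarrow> \<not> E u v)"

definition hom :: "'a set \<Rightarrow> ('a \<Rightarrow> 'a \<Rightarrow> bool) \<Rightarrow> nat" where
  "hom V E = Max {card S | S. S \<subseteq> V \<and> homogeneous E S}"

definition induced_degree :: "('a \<Rightarrow> 'a \<Rightarrow> bool) \<Rightarrow> 'a set \<Rightarrow> 'a \<Rightarrow> nat" where
  "induced_degree E S v = card {u \<in> S. E v u}"

definition num_distinct_degrees :: "('a \<Rightarrow> 'a \<Rightarrow> bool) \<Rightarrow> 'a set \<Rightarrow> nat" where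
  "num_distinct_degrees E S = card (induced_degree E S ` S)"

definition f_distinct :: "'a set \<Rightarrow> ('a \<Rightarrow> 'a \<Rightarrow> bool) \<Rightarrow> nat" where
  "f_distinct V E = Max {num_distinct_degrees E S | S. S \<subseteq> V}"

end

(* For an induced subgraph G[W], Cauchy-Schwarz over the degree classes gives
   |W|^2 <= f(G) * #{(x, y) in W^2. d_W(x) = d_W(y)}.  Summing over all W and exchanging
   the order of summation, the left side becomes n 2^(n-2) (n + 1).  On the right, for
   x ~= y let d be the number of vertices adjacent to exactly one of x, y: the sets W
   containing x, y with d_W(x) = d_W(y) are those containing as many private neighbours
   of x as of y, and there are at most C(d, d/2) 2^(n-2-d) <= 2^(n-2) / sqrt(d + 1) of them.
   By AM-GM, 1 / sqrt(d + 1) <= k / (d + 1) + 1 / (4k) with k = f(G), and Caro-Wei, applied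
   to the neighbourhood and to the non-neighbourhood of x, bounds the sum of the
   1 / (d + 1) over y by 2 hom(G).  Altogether 3n + 5 <= 8k + 8k^2 hom(G), so
   n / hom(G) <= 6 k^2. *)

theory Submission
  imports Defs "HOL-Analysis.Convex"
begin

lemma card_squared_le_card_image_mult_card_equal_pairs:
  assumes "finite W"
  shows "card W ^ 2 \<le> card (g ` W) * card {(x, y) \<in> W \<times> W. g x = g y}"
proof -
  define fibre where "fibre v = {x \<in> W. g x = v}" for v
  have fin: "finite (fibre v)" for v
    using assms by (simp add: fibre_def)
  have disj: "fibre v \<inter> fibre w = {}" if "v \<noteq> w" for v w
    using that by (auto simp: fibre_def)
  have "card W = card (\<Union>v\<in>g ` W. fibre v)"
    by (rule arg_cong[where f = card]) (auto simp: fibre_def)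
  also have "\<dots> = (\<Sum>v\<in>g ` W. card (fibre v))"
    using assms fin disj by (intro card_UN_disjoint) auto
  finally have card_W: "card W = (\<Sum>v\<in>g ` W. card (fibre v))" .
  have "card {(x, y) \<in> W \<times> W. g x = g y} = card (\<Union>v\<in>g ` W. fibre v \<times> fibre v)"
    by (rule arg_cong[where f = card]) (auto simp: fibre_def)
  also have "\<dots> = (\<Sum>v\<in>g ` W. card (fibre v) ^ 2)"
    using assms fin disj by (subst card_UN_disjoint) (auto simp: power2_eq_square card_cartesian_product)
  finally have card_pairs: "card {(x, y) \<in> W \<times> W. g x = g y} = (\<Sum>v\<in>g ` W. card (fibre v) ^ 2)" .
  have "real (card W) ^ 2 \<le> (\<Sum>v\<in>g ` W. real (card (fibre v)) ^ 2) * card (g ` W)"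
    unfolding card_W of_nat_sum by (rule sum_squared_le_sum_of_squares)
  then have "real (card W ^ 2) \<le> real (card (g ` W) * card {(x, y) \<in> W \<times> W. g x = g y})"
    unfolding card_pairs by (simp add: mult.commute)
  then show ?thesis
    by (simp only: of_nat_le_iff)
qed

lemma sum_card_filter_swap:
  assumes "finite A" and "finite B"
  shows "(\<Sum>a\<in>A. card {b \<in> B. R a b}) = (\<Sum>b\<in>B. card {a \<in> A. R a b})"
  using sum.swap_restrict[OF assms, of "\<lambda>_ _. 1::nat" R] by simp

lemma card_filter_eq_iff:
  assumes "finite W"
  shows "card {u \<in> W. P u} = card {u \<in> W. Q u}
           \<longleftrightarrow> card {u \<in> W. P u \<and> \<not> Q u} = card {u \<in> W. Q u \<and> \<not> P u}"
proof -
  have split: "card {u \<in> W. R u} = card {u \<in> W. R u \<and> \<not> R' u} + card {u \<in> W. R u \<and> R' u}" for R R'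
  proof -
    have "{u \<in> W. R u} = {u \<in> W. R u \<and> \<not> R' u} \<union> {u \<in> W. R u \<and> R' u}"
      by auto
    then show ?thesis
      using assms by (simp add: card_Un_disjoint disjoint_iff)
  qed
  show ?thesis
    using split[of P Q] split[of Q P] by (simp add: conj_commute)
qed

lemma card_supersets:
  assumes "finite V" and "S \<subseteq> V"
  shows "card {W \<in> Pow V. S \<subseteq> W} = 2 ^ card (V - S)"
proof -
  have "bij_betw (\<lambda>Z. Z \<union> S) (Pow (V - S)) {W \<in> Pow V. S \<subseteq> W}"
    by (rule bij_betw_byWitness[where f' = "\<lambda>W. W - S"]) (use assms in auto)
  then show ?thesis
    using assms by (simp flip: bij_betw_same_card add: card_Pow)
qed

lemma two_power_card_Diff:
  assumes "finite V" and "S \<subseteq> V"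
  shows "(2::real) ^ card (V - S) = 2 ^ card V / 2 ^ card S"
proof -
  have "card V = card (V - S) + card S"
    using assms by (metis card_Diff_subset card_mono finite_subset le_add_diff_inverse2)
  then show ?thesis
    by (simp add: power_add)
qed

lemma card_balanced_subsets_le:
  assumes "finite U" and "A \<subseteq> U" and "B \<subseteq> U" and "A \<inter> B = {}"
  shows "card {W \<in> Pow U. card (W \<inter> A) = card (W \<inter> B)}
           \<le> (card (A \<union> B) choose card B) * 2 ^ card (U - (A \<union> B))"
proof -
  let ?Bal = "{W \<in> Pow U. card (W \<inter> A) = card (W \<inter> B)}"
  let ?Codes = "{Z. Z \<subseteq> A \<union> B \<and> card Z = card B} \<times> Pow (U - (A \<union> B))"
  define code where "code W = ((W \<inter> A) \<union> (B - W), W - (A \<union> B))" for W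
  have fin: "finite A" "finite B"
    using assms by (auto intro: finite_subset)
  have "inj_on code ?Bal"
    by (rule inj_on_inverseI[where g = "\<lambda>(Z, R). (Z \<inter> A) \<union> (B - Z) \<union> R"])
       (use assms in \<open>auto simp: code_def\<close>)
  moreover have "code ` ?Bal \<subseteq> ?Codes"
  proof (rule image_subsetI)
    fix W assume "W \<in> ?Bal"
    then have W: "W \<subseteq> U" "card (W \<inter> A) = card (W \<inter> B)"
      by auto
    have "card ((W \<inter> A) \<union> (B - W)) = card (W \<inter> B) + card (B - W)"
      using W(2) fin assms(4) by (subst card_Un_disjoint) auto
    also have "\<dots> = card B"
      using fin by (metis Int_commute card_Int_Diff)
    finally show "code W \<in> ?Codes"
      using W(1) by (auto simp: code_def)
  qed
  moreover have "finite ?Codes"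
    using assms fin by auto
  ultimately have "card ?Bal \<le> card ?Codes"
    by (intro card_inj_on_le)
  also have "card ?Codes = (card (A \<union> B) choose card B) * 2 ^ card (U - (A \<union> B))"
    using assms fin by (simp add: card_cartesian_product n_subsets card_Pow)
  finally show ?thesis .
qed

lemma central_binomial_Suc_eq_double: "(2 * Suc m) choose Suc m = 2 * ((2 * m + 1) choose m)"
proof -
  have "(2 * m + 1) choose Suc m = (2 * m + 1) choose m"
    using central_binomial_odd[of "2 * m + 1"] by simp
  then show ?thesis
    by simp
qed

lemma central_binomial_Suc_mult: "Suc m * ((2 * Suc m) choose Suc m) = 2 * (2 * m + 1) * ((2 * m) choose m)"
proof -
  have "(2 * m + 1) * ((2 * m) choose m) = ((2 * m + 1) choose Suc m) * Suc m"
    using Suc_times_binomial_eq[of "2 * m" m] by simp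
  also have "(2 * m + 1) choose Suc m = (2 * m + 1) choose m"
    using central_binomial_odd[of "2 * m + 1"] by simp
  finally show ?thesis
    unfolding central_binomial_Suc_eq_double by (simp add: algebra_simps)
qed

lemma central_binomial_squared_le: "real ((2 * m) choose m) ^ 2 * (2 * real m + 1) \<le> 16 ^ m"
proof (induction m)
  case 0
  then show ?case by simp
next
  case (Suc m)
  define c where "c = real ((2 * m) choose m)"
  define c' where "c' = real ((2 * Suc m) choose Suc m)"
  have rec: "(real m + 1) * c' = 2 * (2 * real m + 1) * c"
    unfolding c_def c'_def using arg_cong[OF central_binomial_Suc_mult[of m], of real]
    by (simp add: algebra_simps del: binomial_Suc_Suc)
  have "(real m + 1) ^ 2 * (c' ^ 2 * (2 * real m + 3)) = ((real m + 1) * c') ^ 2 * (2 * real m + 3)"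
    by (simp add: power_mult_distrib)
  also have "\<dots> = 4 * (2 * real m + 1) * (2 * real m + 3) * (c ^ 2 * (2 * real m + 1))"
    unfolding rec by (simp add: power2_eq_square algebra_simps)
  also have "\<dots> \<le> 4 * (2 * real m + 1) * (2 * real m + 3) * 16 ^ m"
    using Suc.IH by (intro mult_left_mono) (auto simp: c_def)
  also have "\<dots> \<le> (real m + 1) ^ 2 * 16 ^ Suc m"
    by (simp add: power2_eq_square algebra_simps)
  finally have "(real m + 1) ^ 2 * (c' ^ 2 * (2 * real m + 3)) \<le> (real m + 1) ^ 2 * 16 ^ Suc m" .
  then have "c' ^ 2 * (2 * real m + 3) \<le> 16 ^ Suc m"
    by (rule mult_left_le_imp_le) simp
  then show ?case
    by (simp add: c'_def algebra_simps del: binomial_Suc_Suc)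
qed

lemma middle_binomial_squared_le: "real (n choose (n div 2)) ^ 2 * (real n + 1) \<le> 4 ^ n"
proof (cases "even n")
  case True
  then obtain m where n: "n = 2 * m" by blast
  have "real (n choose (n div 2)) ^ 2 * (real n + 1) = real ((2 * m) choose m) ^ 2 * (2 * real m + 1)"
    by (simp add: n)
  also have "\<dots> \<le> 16 ^ m"
    by (rule central_binomial_squared_le)
  also have "\<dots> = 4 ^ n"
    by (simp add: n power_mult)
  finally show ?thesis .
next
  case False
  then obtain m where n: "n = 2 * m + 1" using oddE by blast
  have double: "real ((2 * Suc m) choose Suc m) = 2 * real ((2 * m + 1) choose m)"
    using arg_cong[OF central_binomial_Suc_eq_double[of m], of real] by (simp only: of_nat_mult of_nat_numeral)
  have "real (n choose (n div 2)) ^ 2 * (real n + 1) = real ((2 * m + 1) choose m) ^ 2 * (2 * real m + 2)"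
    by (simp add: n)
  also have "\<dots> \<le> real ((2 * m + 1) choose m) ^ 2 * (2 * real m + 3)"
    by (intro mult_left_mono) auto
  also have "\<dots> = real ((2 * Suc m) choose Suc m) ^ 2 * (2 * real (Suc m) + 1) / 4"
    unfolding double by (simp add: power2_eq_square algebra_simps)
  also have "\<dots> \<le> 16 ^ Suc m / 4"
    using central_binomial_squared_le[of "Suc m"] by (intro divide_right_mono) auto
  also have "\<dots> = 4 ^ n"
    by (simp add: n power_mult)
  finally show ?thesis .
qed

lemma middle_binomial_le: "real (n choose (n div 2)) \<le> 2 ^ n / sqrt (real n + 1)"
proof -
  have "(real (n choose (n div 2)) * sqrt (real n + 1)) ^ 2 = real (n choose (n div 2)) ^ 2 * (real n + 1)"
    by (simp add: power_mult_distrib)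
  also have "\<dots> \<le> 4 ^ n"
    by (rule middle_binomial_squared_le)
  also have "\<dots> = (2 ^ n) ^ 2"
    by (simp add: power2_eq_square flip: power_mult_distrib)
  finally have "real (n choose (n div 2)) * sqrt (real n + 1) \<le> 2 ^ n"
    by (rule power2_le_imp_le) simp
  then show ?thesis
    by (simp add: pos_le_divide_eq)
qed

lemma inverse_sqrt_le_AM_GM:
  fixes t k :: real
  assumes "t > 0" and "k > 0"
  shows "1 / sqrt t \<le> k / t + 1 / (4 * k)"
proof -
  define s where "s = sqrt t"
  have s: "s > 0" "t = s ^ 2"
    using assms by (auto simp: s_def)
  have "0 \<le> (2 * k - s) ^ 2 / (4 * k * s ^ 2)"
    using assms(2) by simp
  also have "\<dots> = k / t + 1 / (4 * k) - 1 / s"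
    using s assms by (simp add: field_simps power2_eq_square)
  finally show ?thesis
    by (simp add: s_def)
qed

lemma card_balanced_subsets_le_sqrt:
  assumes "finite U" and "A \<subseteq> U" and "B \<subseteq> U" and "A \<inter> B = {}"
  shows "real (card {W \<in> Pow U. card (W \<inter> A) = card (W \<inter> B)})
           \<le> 2 ^ card U / sqrt (real (card (A \<union> B)) + 1)"
proof -
  define d where "d = card (A \<union> B)"
  have "finite (A \<union> B)"
    using assms by (auto intro: finite_subset)
  then have "card B \<le> d"
    unfolding d_def by (intro card_mono) auto
  have split: "(2::real) ^ card (U - (A \<union> B)) * 2 ^ d = 2 ^ card U"
    using two_power_card_Diff[of U "A \<union> B"] assms by (simp add: d_def)
  have "real (card {W \<in> Pow U. card (W \<inter> A) = card (W \<inter> B)})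
          \<le> real (d choose card B) * 2 ^ card (U - (A \<union> B))"
  proof -
    have "real (card {W \<in> Pow U. card (W \<inter> A) = card (W \<inter> B)})
            \<le> real ((d choose card B) * 2 ^ card (U - (A \<union> B)))"
      using card_balanced_subsets_le[OF assms] unfolding d_def by (simp only: of_nat_le_iff)
    then show ?thesis
      by simp
  qed
  also have "\<dots> \<le> real (d choose (d div 2)) * 2 ^ card (U - (A \<union> B))"
    by (intro mult_right_mono) (auto simp: binomial_maximum)
  also have "\<dots> \<le> 2 ^ d / sqrt (real d + 1) * 2 ^ card (U - (A \<union> B))"
    by (intro mult_right_mono middle_binomial_le) auto
  also have "\<dots> = 2 ^ card U / sqrt (real (card (A \<union> B)) + 1)"
    by (simp flip: split add: d_def)
  finally show ?thesis .
qed

lemma sum_inverse_le_one: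
  assumes "card N \<le> m + 1" and "\<And>y. y \<in> N \<Longrightarrow> m \<le> d y"
  shows "(\<Sum>y\<in>N. 1 / (real (d y) + 1)) \<le> 1"
proof -
  have "(\<Sum>y\<in>N. 1 / (real (d y) + 1)) \<le> (\<Sum>y\<in>N. 1 / (real m + 1))"
    using assms(2) by (intro sum_mono divide_left_mono) auto
  also have "\<dots> = real (card N) / (real m + 1)"
    by simp
  also have "\<dots> \<le> 1"
    using assms(1) by simp
  finally show ?thesis .
qed

lemma caro_wei_step:
  fixes F :: "'a \<Rightarrow> 'a \<Rightarrow> bool" and S :: "'a set" and v :: 'a
  defines "N \<equiv> insert v {z \<in> S. F v z}"
  assumes "finite S" and "v \<in> S" and "\<And>u. u \<in> S \<Longrightarrow> card {z \<in> S. F v z} \<le> card {z \<in> S. F u z}"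
  shows "(\<Sum>y\<in>S. 1 / (real (card {z \<in> S. F y z}) + 1))
           \<le> 1 + (\<Sum>y\<in>S - N. 1 / (real (card {z \<in> S - N. F y z}) + 1))"
proof -
  have "N \<subseteq> S"
    using assms(3) by (auto simp: N_def)
  have "card N \<le> card {z \<in> S. F v z} + 1"
    using assms(2) by (simp add: N_def card_insert_if)
  then have "(\<Sum>y\<in>N. 1 / (real (card {z \<in> S. F y z}) + 1)) \<le> 1"
    using \<open>N \<subseteq> S\<close> assms(4) by (intro sum_inverse_le_one) auto
  moreover have "(\<Sum>y\<in>S - N. 1 / (real (card {z \<in> S. F y z}) + 1))
      \<le> (\<Sum>y\<in>S - N. 1 / (real (card {z \<in> S - N. F y z}) + 1))"
    using assms(2) by (intro sum_mono divide_left_mono) (auto intro!: card_mono)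
  moreover have "(\<Sum>y\<in>S. 1 / (real (card {z \<in> S. F y z}) + 1))
      = (\<Sum>y\<in>N. 1 / (real (card {z \<in> S. F y z}) + 1)) + (\<Sum>y\<in>S - N. 1 / (real (card {z \<in> S. F y z}) + 1))"
    by (subst sum.subset_diff[OF \<open>N \<subseteq> S\<close> assms(2)]) (simp add: add.commute)
  ultimately show ?thesis
    by linarith
qed

lemma caro_wei:
  fixes F :: "'a \<Rightarrow> 'a \<Rightarrow> bool"
  assumes "finite S" and "\<And>u v. u \<in> S \<Longrightarrow> v \<in> S \<Longrightarrow> F u v \<Longrightarrow> F v u"
  shows "\<exists>I\<subseteq>S. (\<forall>u\<in>I. \<forall>v\<in>I. u \<noteq> v \<longrightarrow> \<not> F u v) \<and>
           (\<Sum>y\<in>S. 1 / (real (card {z \<in> S. F y z}) + 1)) \<le> real (card I)"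
  using assms
proof (induction "card S" arbitrary: S rule: less_induct)
  case less
  show ?case
  proof (cases "S = {}")
    case True
    then show ?thesis by auto
  next
    case False
    then obtain v where v: "v \<in> S" "\<forall>u. u \<in> S \<longrightarrow> card {z \<in> S. F v z} \<le> card {z \<in> S. F u z}"
      using ex_has_least_nat[of "\<lambda>u. u \<in> S" _ "\<lambda>u. card {z \<in> S. F u z}"] by blast
    define S' where "S' = S - insert v {z \<in> S. F v z}"
    have "card S' < card S"
      unfolding S'_def using v(1) less.prems(1) by (intro psubset_card_mono) auto
    moreover have "finite S'"
      using less.prems(1) by (simp add: S'_def)
    moreover have "F b a" if "a \<in> S'" "b \<in> S'" "F a b" for a b
      using that less.prems(2) by (auto simp: S'_def)
    ultimately have "\<exists>I\<subseteq>S'. (\<forall>u\<in>I. \<forall>w\<in>I. u \<noteq> w \<longrightarrow> \<not> F u w) \<and>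
        (\<Sum>y\<in>S'. 1 / (real (card {z \<in> S'. F y z}) + 1)) \<le> real (card I)"
      by (rule less.hyps)
    then obtain I' where I': "I' \<subseteq> S'" "\<forall>u\<in>I'. \<forall>w\<in>I'. u \<noteq> w \<longrightarrow> \<not> F u w"
        "(\<Sum>y\<in>S'. 1 / (real (card {z \<in> S'. F y z}) + 1)) \<le> real (card I')"
      by blast
    have "(\<Sum>y\<in>S. 1 / (real (card {z \<in> S. F y z}) + 1))
        \<le> 1 + (\<Sum>y\<in>S'. 1 / (real (card {z \<in> S'. F y z}) + 1))"
      unfolding S'_def using v(2) by (intro caro_wei_step[OF less.prems(1) v(1)]) blast
    also have "\<dots> \<le> 1 + real (card I')"
      using I'(3) by simp
    also have "\<dots> = real (card (insert v I'))"
      using I'(1) less.prems(1) by (subst card_insert_disjoint) (auto simp: S'_def intro: finite_subset)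
    finally have bound: "(\<Sum>y\<in>S. 1 / (real (card {z \<in> S. F y z}) + 1)) \<le> real (card (insert v I'))" .
    have "\<not> F v u" "\<not> F u v" if "u \<in> I'" for u
      using that I'(1) less.prems(2) v(1) by (auto simp: S'_def)
    then have "\<forall>u\<in>insert v I'. \<forall>w\<in>insert v I'. u \<noteq> w \<longrightarrow> \<not> F u w"
      using I'(2) by blast
    then show ?thesis
      using bound I'(1) v(1) by (intro exI[of _ "insert v I'"]) (auto simp: S'_def)
  qed
qed

lemma card_le_hom:
  assumes "finite V" and "S \<subseteq> V" and "homogeneous E S"
  shows "card S \<le> hom V E"
  unfolding hom_def using assms by (intro Max_ge) (auto intro: finite_surj[of "Pow V" _ card])

lemma num_distinct_degrees_le_f_distinct:
  assumes "finite V" and "W \<subseteq> V"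
  shows "num_distinct_degrees E W \<le> f_distinct V E"
  unfolding f_distinct_def using assms
  by (intro Max_ge) (auto intro: finite_surj[of "Pow V" _ "num_distinct_degrees E"])

lemma one_le_hom:
  assumes "finite V" and "V \<noteq> {}"
  shows "1 \<le> hom V E"
proof -
  obtain v where "v \<in> V"
    using assms(2) by blast
  then show ?thesis
    using card_le_hom[OF assms(1), of "{v}" E] by (simp add: homogeneous_def)
qed

lemma one_le_f_distinct:
  assumes "finite V" and "V \<noteq> {}"
  shows "1 \<le> f_distinct V E"
proof -
  obtain v where "v \<in> V"
    using assms(2) by blast
  then show ?thesis
    using num_distinct_degrees_le_f_distinct[OF assms(1), of "{v}" E]
    by (simp add: num_distinct_degrees_def)
qed

definition distinguishers :: "'a set \<Rightarrow> ('a \<Rightarrow> 'a \<Rightarrow> bool) \<Rightarrow> 'a \<Rightarrow> 'a \<Rightarrow> 'a set" where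
  "distinguishers V E x y = {u \<in> V - {x, y}. E x u \<noteq> E y u}"

lemma sum_inverse_distinguishers_le_hom:
  assumes sg: "simple_graph V E" and "S \<subseteq> V - {x}" and adj: "\<And>y. y \<in> S \<Longrightarrow> E x y = b"
  shows "(\<Sum>y\<in>S. 1 / (real (card (distinguishers V E x y)) + 1)) \<le> real (hom V E)"
proof -
  \<comment> \<open>If y, z \<in> S are joined by F, then z distinguishes x from y; and F-independent
     sets are cliques (b = True) or independent sets (b = False).\<close>
  define F where "F y z \<longleftrightarrow> y \<noteq> z \<and> E y z \<noteq> b" for y z
  have finV: "finite V"
    using sg by (simp add: simple_graph_def)
  then have finS: "finite S"
    using finite_subset[OF assms(2)] by auto
  have F_sym: "F v u" if "u \<in> S" "v \<in> S" "F u v" for u v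
    using that sg assms(2) by (auto simp: F_def simple_graph_def)
  obtain I where I: "I \<subseteq> S" "\<forall>u\<in>I. \<forall>v\<in>I. u \<noteq> v \<longrightarrow> \<not> F u v"
      and caro_wei_bound: "(\<Sum>y\<in>S. 1 / (real (card {z \<in> S. F y z}) + 1)) \<le> real (card I)"
    using caro_wei[of S F, OF finS F_sym] by blast
  have "E u v = b" if "u \<in> I" "v \<in> I" "u \<noteq> v" for u v
    using I(2) that by (auto simp: F_def)
  then have "homogeneous E I"
    unfolding homogeneous_def by (cases b) simp_all
  then have "card I \<le> hom V E"
    using I(1) assms(2) finV by (intro card_le_hom) auto
  have "{z \<in> S. F y z} \<subseteq> distinguishers V E x y" if "y \<in> S" for y
    using that assms(2) adj by (auto simp: F_def distinguishers_def)
  then have "(\<Sum>y\<in>S. 1 / (real (card (distinguishers V E x y)) + 1))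
      \<le> (\<Sum>y\<in>S. 1 / (real (card {z \<in> S. F y z}) + 1))"
    using finV by (intro sum_mono divide_left_mono) (auto simp: distinguishers_def intro!: card_mono)
  then show ?thesis
    using caro_wei_bound \<open>card I \<le> hom V E\<close> by linarith
qed

lemma sum_inverse_distinguishers_le_double_hom:
  assumes sg: "simple_graph V E" and "x \<in> V"
  shows "(\<Sum>y\<in>V - {x}. 1 / (real (card (distinguishers V E x y)) + 1)) \<le> 2 * real (hom V E)"
proof -
  have "finite V"
    using sg by (simp add: simple_graph_def)
  then have "(\<Sum>y\<in>V - {x}. 1 / (real (card (distinguishers V E x y)) + 1))
      = (\<Sum>y\<in>(V - {x}) \<inter> {y. E x y}. 1 / (real (card (distinguishers V E x y)) + 1))
        + (\<Sum>y\<in>(V - {x}) - {y. E x y}. 1 / (real (card (distinguishers V E x y)) + 1))"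
    by (intro sum.Int_Diff) simp
  also have "\<dots> \<le> real (hom V E) + real (hom V E)"
    by (intro add_mono sum_inverse_distinguishers_le_hom[OF sg]) auto
  finally show ?thesis
    by simp
qed

lemma induced_degree_eq_imp_balanced:
  assumes sg: "simple_graph V E" and "W \<subseteq> V" and "x \<in> W" and "y \<in> W"
    and "induced_degree E W x = induced_degree E W y"
  shows "card (W \<inter> {u \<in> V - {x, y}. E x u \<and> \<not> E y u}) = card (W \<inter> {u \<in> V - {x, y}. E y u \<and> \<not> E x u})"
proof -
  have fin: "finite W"
    using sg finite_subset[OF assms(2)] by (simp add: simple_graph_def)
  have one_sided: "card {u \<in> W. E a u \<and> \<not> E b u}
      = card (W \<inter> {u \<in> V - {a, b}. E a u \<and> \<not> E b u}) + (if a \<noteq> b \<and> E a b then 1 else 0)"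
    if "a \<in> W" "b \<in> W" for a b
  proof -
    have "\<not> E a a" "\<not> E b b"
      using sg assms(2) that by (auto simp: simple_graph_def)
    then have "{u \<in> W. E a u \<and> \<not> E b u}
        = (W \<inter> {u \<in> V - {a, b}. E a u \<and> \<not> E b u}) \<union> (if a \<noteq> b \<and> E a b then {b} else {})"
      using assms(2) that by auto
    then show ?thesis
      using fin by (simp add: card_Un_disjoint)
  qed
  have "E x y = E y x"
    using sg assms(2-4) by (auto simp: simple_graph_def)
  moreover have "card {u \<in> W. E x u \<and> \<not> E y u} = card {u \<in> W. E y u \<and> \<not> E x u}"
    using assms(5) card_filter_eq_iff[OF fin] unfolding induced_degree_def by blast
  ultimately show ?thesis
    using one_sided[OF assms(3,4)] one_sided[OF assms(4,3)] by (cases "x = y") (simp_all add: insert_commute)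
qed

lemma card_equal_degree_supersets_le:
  assumes sg: "simple_graph V E" and "x \<in> V" and "y \<in> V" and "x \<noteq> y"
  shows "real (card {W \<in> Pow V. x \<in> W \<and> y \<in> W \<and> induced_degree E W x = induced_degree E W y})
           \<le> 2 ^ card V / 4 * (1 / sqrt (real (card (distinguishers V E x y)) + 1))"
proof -
  define A where "A = {u \<in> V - {x, y}. E x u \<and> \<not> E y u}"
  define B where "B = {u \<in> V - {x, y}. E y u \<and> \<not> E x u}"
  let ?Eq = "{W \<in> Pow V. x \<in> W \<and> y \<in> W \<and> induced_degree E W x = induced_degree E W y}"
  let ?Bal = "{W \<in> Pow (V - {x, y}). card (W \<inter> A) = card (W \<inter> B)}"
  have finV: "finite V"
    using sg by (simp add: simple_graph_def)
  have "inj_on (\<lambda>W. W - {x, y}) ?Eq"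
    by (rule inj_on_inverseI[where g = "\<lambda>W. insert x (insert y W)"]) auto
  moreover have "(\<lambda>W. W - {x, y}) ` ?Eq \<subseteq> ?Bal"
  proof (rule image_subsetI)
    fix W assume W: "W \<in> ?Eq"
    then have "card (W \<inter> A) = card (W \<inter> B)"
      unfolding A_def B_def by (intro induced_degree_eq_imp_balanced[OF sg]) auto
    moreover have "(W - {x, y}) \<inter> A = W \<inter> A" "(W - {x, y}) \<inter> B = W \<inter> B"
      by (auto simp: A_def B_def)
    ultimately show "W - {x, y} \<in> ?Bal"
      using W by auto
  qed
  moreover have "finite ?Bal"
    using finV by simp
  ultimately have "real (card ?Eq) \<le> real (card ?Bal)"
    by (simp add: card_inj_on_le)
  also have "\<dots> \<le> 2 ^ card (V - {x, y}) / sqrt (real (card (A \<union> B)) + 1)"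
    using finV by (intro card_balanced_subsets_le_sqrt) (auto simp: A_def B_def)
  also have "A \<union> B = distinguishers V E x y"
    by (auto simp: A_def B_def distinguishers_def)
  also have "(2::real) ^ card (V - {x, y}) = 2 ^ card V / 4"
    using two_power_card_Diff[OF finV, of "{x, y}"] assms by simp
  finally show ?thesis
    by simp
qed

lemma sum_card_pair_supersets_le_f_distinct:
  assumes "finite V"
  shows "(\<Sum>x\<in>V. \<Sum>y\<in>V. card {W \<in> Pow V. x \<in> W \<and> y \<in> W})
           \<le> f_distinct V E * (\<Sum>x\<in>V. \<Sum>y\<in>V. card {W \<in> Pow V. x \<in> W \<and> y \<in> W \<and>
                                  induced_degree E W x = induced_degree E W y})"
proof -
  have double_count: "(\<Sum>x\<in>V. \<Sum>y\<in>V. card {W \<in> Pow V. P W x y})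
      = (\<Sum>W\<in>Pow V. card {(x, y) \<in> V \<times> V. P W x y})" for P
    using sum_card_filter_swap[of "V \<times> V" "Pow V" "\<lambda>p W. P W (fst p) (snd p)"] assms
    by (simp add: sum.cartesian_product case_prod_beta' mem_Times_iff)
  have "card {(x, y) \<in> V \<times> V. x \<in> W \<and> y \<in> W}
      \<le> f_distinct V E * card {(x, y) \<in> V \<times> V. x \<in> W \<and> y \<in> W \<and> induced_degree E W x = induced_degree E W y}"
    if "W \<subseteq> V" for W
  proof -
    have fin: "finite W"
      using assms that by (rule rev_finite_subset)
    have "{(x, y) \<in> V \<times> V. x \<in> W \<and> y \<in> W} = W \<times> W"
      using that by auto
    then have "card {(x, y) \<in> V \<times> V. x \<in> W \<and> y \<in> W} = card W ^ 2"
      by (simp add: card_cartesian_product power2_eq_square)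
    also have "\<dots> \<le> num_distinct_degrees E W * card {(x, y) \<in> W \<times> W. induced_degree E W x = induced_degree E W y}"
      unfolding num_distinct_degrees_def by (rule card_squared_le_card_image_mult_card_equal_pairs[OF fin])
    also have "\<dots> \<le> f_distinct V E * card {(x, y) \<in> W \<times> W. induced_degree E W x = induced_degree E W y}"
      using assms that by (intro mult_right_mono num_distinct_degrees_le_f_distinct) auto
    also have "{(x, y) \<in> W \<times> W. induced_degree E W x = induced_degree E W y}
        = {(x, y) \<in> V \<times> V. x \<in> W \<and> y \<in> W \<and> induced_degree E W x = induced_degree E W y}"
      using that by auto
    finally show ?thesis .
  qed
  then show ?thesis
    unfolding double_count sum_distrib_left by (intro sum_mono) auto
qed

lemma real_card_pair_supersets:
  assumes "finite V" and "x \<in> V" and "y \<in> V"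
  shows "real (card {W \<in> Pow V. x \<in> W \<and> y \<in> W}) = 2 ^ card V / (if x = y then 2 else 4)"
proof -
  have "{W \<in> Pow V. x \<in> W \<and> y \<in> W} = {W \<in> Pow V. {x, y} \<subseteq> W}"
    by auto
  then have "real (card {W \<in> Pow V. x \<in> W \<and> y \<in> W}) = 2 ^ card (V - {x, y})"
    using card_supersets[OF assms(1), of "{x, y}"] assms by simp
  also have "\<dots> = 2 ^ card V / 2 ^ card {x, y}"
    using two_power_card_Diff[OF assms(1), of "{x, y}"] assms by simp
  also have "\<dots> = 2 ^ card V / (if x = y then 2 else 4)"
    by simp
  finally show ?thesis .
qed

lemma sum_card_pair_supersets:
  assumes "finite V" and "x \<in> V"
  shows "(\<Sum>y\<in>V. real (card {W \<in> Pow V. x \<in> W \<and> y \<in> W})) = 2 ^ card V / 4 * (real (card V) + 1)"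
proof -
  have "(\<Sum>y\<in>V - {x}. real (card {W \<in> Pow V. x \<in> W \<and> y \<in> W})) = (\<Sum>y\<in>V - {x}. 2 ^ card V / 4)"
  proof (intro sum.cong refl)
    fix y assume "y \<in> V - {x}"
    then show "real (card {W \<in> Pow V. x \<in> W \<and> y \<in> W}) = 2 ^ card V / 4"
      using real_card_pair_supersets[OF assms, of y] by auto
  qed
  moreover have "real (card {W \<in> Pow V. x \<in> W \<and> x \<in> W}) = 2 ^ card V / 2"
    using real_card_pair_supersets[OF assms assms(2)] by simp
  ultimately have "(\<Sum>y\<in>V. real (card {W \<in> Pow V. x \<in> W \<and> y \<in> W}))
      = 2 ^ card V / 2 + real (card (V - {x})) * (2 ^ card V / 4)"
    by (simp add: sum.remove[OF assms])
  also have "real (card (V - {x})) = real (card V) - 1"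
    using card.remove[OF assms] by simp
  finally show ?thesis
    by (simp add: field_simps)
qed

lemma sum_card_equal_degree_supersets_le:
  fixes k :: real
  assumes sg: "simple_graph V E" and "x \<in> V" and "k > 0"
  shows "(\<Sum>y\<in>V. real (card {W \<in> Pow V. x \<in> W \<and> y \<in> W \<and> induced_degree E W x = induced_degree E W y}))
           \<le> 2 ^ card V / 4 * (2 + 2 * k * hom V E + (real (card V) - 1) / (4 * k))"
proof -
  let ?Eq = "\<lambda>y. {W \<in> Pow V. x \<in> W \<and> y \<in> W \<and> induced_degree E W x = induced_degree E W y}"
  define c where "c = (2::real) ^ card V / 4"
  define D where "D y = real (card (distinguishers V E x y)) + 1" for y
  have finV: "finite V"
    using sg by (simp add: simple_graph_def)
  have diag: "real (card (?Eq x)) = 2 * c"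
    using real_card_pair_supersets[OF finV assms(2,2)] by (simp add: c_def)
  have off_diag: "real (card (?Eq y)) \<le> c * (k * (1 / D y) + 1 / (4 * k))" if "y \<in> V - {x}" for y
  proof -
    have "real (card (?Eq y)) \<le> c * (1 / sqrt (D y))"
      unfolding c_def D_def using that by (intro card_equal_degree_supersets_le[OF sg assms(2)]) auto
    also have "\<dots> \<le> c * (k * (1 / D y) + 1 / (4 * k))"
      using inverse_sqrt_le_AM_GM[of "D y" k] assms(3) by (intro mult_left_mono) (auto simp: D_def c_def)
    finally show ?thesis .
  qed
  have "(\<Sum>y\<in>V - {x}. c * (k * (1 / D y) + 1 / (4 * k)))
      = c * (\<Sum>y\<in>V - {x}. k * (1 / D y) + 1 / (4 * k))"
    by (rule sum_distrib_left[symmetric])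
  also have "\<dots> = c * (k * (\<Sum>y\<in>V - {x}. 1 / D y) + real (card (V - {x})) / (4 * k))"
    by (simp add: sum.distrib sum_distrib_left)
  also have "real (card (V - {x})) = real (card V) - 1"
    using card.remove[OF finV assms(2)] by simp
  finally have sum_off_diag: "(\<Sum>y\<in>V - {x}. c * (k * (1 / D y) + 1 / (4 * k)))
      = c * (k * (\<Sum>y\<in>V - {x}. 1 / D y) + (real (card V) - 1) / (4 * k))" .
  have "(\<Sum>y\<in>V. real (card (?Eq y))) = real (card (?Eq x)) + (\<Sum>y\<in>V - {x}. real (card (?Eq y)))"
    by (rule sum.remove[OF finV assms(2)])
  also have "\<dots> \<le> 2 * c + c * (k * (\<Sum>y\<in>V - {x}. 1 / D y) + (real (card V) - 1) / (4 * k))"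
    unfolding diag sum_off_diag[symmetric] using off_diag by (intro add_left_mono sum_mono)
  also have "\<dots> \<le> 2 * c + c * (k * (2 * hom V E) + (real (card V) - 1) / (4 * k))"
    using sum_inverse_distinguishers_le_double_hom[OF sg assms(2)] assms(3)
    by (intro add_left_mono mult_left_mono add_right_mono) (auto simp: c_def D_def)
  also have "\<dots> = c * (2 + 2 * k * hom V E + (real (card V) - 1) / (4 * k))"
    by (simp add: algebra_simps)
  finally show ?thesis
    by (simp add: c_def)
qed

lemma card_le_f_distinct_hom:
  assumes sg: "simple_graph V E" and "V \<noteq> {}"
  shows "3 * real (card V) + 5 \<le> 8 * real (f_distinct V E) + 8 * real (f_distinct V E) ^ 2 * real (hom V E)"
proof -
  define n where "n = real (card V)"
  define k where "k = real (f_distinct V E)"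
  define h where "h = real (hom V E)"
  define c where "c = (2::real) ^ card V / 4"
  have finV: "finite V"
    using sg by (simp add: simple_graph_def)
  have "k \<ge> 1"
    using one_le_f_distinct[OF finV assms(2)] by (simp add: k_def)
  have "n > 0"
    using finV assms(2) by (simp add: n_def card_gt_0_iff)
  have "n * c * (n + 1) = (\<Sum>x\<in>V. c * (n + 1))"
    by (simp add: n_def)
  also have "\<dots> = (\<Sum>x\<in>V. \<Sum>y\<in>V. real (card {W \<in> Pow V. x \<in> W \<and> y \<in> W}))"
    unfolding c_def n_def by (intro sum.cong refl) (rule sum_card_pair_supersets[OF finV, symmetric])
  also have "\<dots> \<le> k * (\<Sum>x\<in>V. \<Sum>y\<in>V. real (card {W \<in> Pow V. x \<in> W \<and> y \<in> W \<and>
                                    induced_degree E W x = induced_degree E W y}))"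
  proof -
    have "real (\<Sum>x\<in>V. \<Sum>y\<in>V. card {W \<in> Pow V. x \<in> W \<and> y \<in> W})
        \<le> real (f_distinct V E * (\<Sum>x\<in>V. \<Sum>y\<in>V. card {W \<in> Pow V. x \<in> W \<and> y \<in> W \<and>
                                    induced_degree E W x = induced_degree E W y}))"
      by (simp only: of_nat_le_iff) (rule sum_card_pair_supersets_le_f_distinct[OF finV])
    then show ?thesis
      by (simp add: k_def)
  qed
  also have "\<dots> \<le> k * (\<Sum>x\<in>V. c * (2 + 2 * k * h + (n - 1) / (4 * k)))"
    using sum_card_equal_degree_supersets_le[OF sg] \<open>k \<ge> 1\<close>
    by (intro mult_left_mono sum_mono) (auto simp: c_def h_def n_def)
  also have "\<dots> = n * c * (k * (2 + 2 * k * h + (n - 1) / (4 * k)))"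
    by (simp add: n_def)
  finally have "n + 1 \<le> k * (2 + 2 * k * h + (n - 1) / (4 * k))"
    by (rule mult_left_le_imp_le) (use \<open>n > 0\<close> in \<open>simp add: c_def\<close>)
  moreover have "4 * (k * (2 + 2 * k * h + (n - 1) / (4 * k))) = 8 * k + 8 * k ^ 2 * h + n - 1"
    using \<open>k \<ge> 1\<close> by (simp add: field_simps power2_eq_square)
  ultimately have "3 * n + 5 \<le> 8 * k + 8 * k ^ 2 * h"
    by linarith
  then show ?thesis
    by (simp add: n_def k_def h_def)
qed

lemma card_le_f_distinct_squared_hom:
  assumes "simple_graph V E" and "V \<noteq> {}"
  shows "real (card V) \<le> 6 * real (f_distinct V E) ^ 2 * real (hom V E)"
proof -
  define k where "k = real (f_distinct V E)"
  define h where "h = real (hom V E)"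
  have finV: "finite V"
    using assms(1) by (simp add: simple_graph_def)
  have "k \<ge> 1" "h \<ge> 1"
    using one_le_f_distinct[OF finV assms(2)] one_le_hom[OF finV assms(2)] by (auto simp: k_def h_def)
  then have "1 \<le> k * h"
    using mult_mono[of 1 k 1 h] by simp
  then have "k * 1 \<le> k * (k * h)"
    using \<open>k \<ge> 1\<close> by (intro mult_left_mono) auto
  moreover have "3 * real (card V) + 5 \<le> 8 * k + 8 * (k * (k * h))"
    using card_le_f_distinct_hom[OF assms] by (simp add: k_def h_def power2_eq_square mult.assoc)
  ultimately have "real (card V) \<le> 6 * (k * (k * h))"
    using \<open>k \<ge> 1\<close> by linarith
  then show ?thesis
    by (simp add: k_def h_def power2_eq_square mult.assoc)
qed

theorem theorem1p1:
  fixes V :: "'a set" and E :: "'a \<Rightarrow> 'a \<Rightarrow> bool"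
  assumes "simple_graph V E" and "card V \<ge> 1"
  shows "real (f_distinct V E) \<ge> (1/250) * sqrt (real (card V) / real (hom V E))"
proof -
  define k where "k = real (f_distinct V E)"
  define h where "h = real (hom V E)"
  have finV: "finite V" and "V \<noteq> {}"
    using assms by (auto simp: simple_graph_def)
  have "k \<ge> 1" "h \<ge> 1"
    using one_le_f_distinct[OF finV \<open>V \<noteq> {}\<close>] one_le_hom[OF finV \<open>V \<noteq> {}\<close>] by (auto simp: k_def h_def)
  have "real (card V) \<le> 6 * k ^ 2 * h"
    using card_le_f_distinct_squared_hom[OF assms(1) \<open>V \<noteq> {}\<close>] by (simp add: k_def h_def)
  also have "\<dots> \<le> (250 * k) ^ 2 * h"
    using \<open>h \<ge> 1\<close> by (simp add: power_mult_distrib)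
  finally have "real (card V) / h \<le> (250 * k) ^ 2"
    using \<open>h \<ge> 1\<close> by (simp add: divide_le_eq)
  then have "sqrt (real (card V) / h) \<le> 250 * k"
    using \<open>k \<ge> 1\<close> by (intro real_le_lsqrt) auto
  then show ?thesis
    by (simp add: k_def h_def)
qed

end
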